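(* Let $V_1,V_2$ satisfy (C1), (C2) below, let $v$ and the Markov chain $(Y_n)_{n\ge0}$ under $\mathbf{P}^{(0,0)}$ be as described below. There exists a constant $C\in(0,\infty)$ such that for all $n\in\mathbb{N}$, $$\mathbf{E}^{(0,0)}\big(|Y_n|\big)\le C,\qquad \mathbf{E}^{(0,0)}\Big(\frac{1}{v(Y_n)}\Big)\le C.$$
   Context: Assumptions: (C1) $V_1:\mathbb{R}\to\mathbb{R}$ measurable, bounded from below, symmetric, $\lim_{|x|\to\infty}V_1(x)=+\infty$, $\int e^{-2V_1}<\infty$; (C2) $V_2:\mathbb{R}\to\mathbb{R}$ measurable, bounded from below, bounded above on $[-\gamma,\gamma]$ for some $\gamma>0$, $\int|x|e^{-V_2(x)}dx<\infty$. $k(x,y)=e^{-V_1(y)-V_2(y-x)}$; $\lambda>0$ is the spectral radius of $(\mathcal{K}f)(x)=\int k(x,y)f(y)dy$ on $L^2(\mathbb{R})$ and $v\in L^2(\mathbb{R})$ is a right eigenfunction with $v(x)>0$ and $v(x)=\lambda^{-1}\int k(x,y)v(y)dy$ for all $x$. Under $\mathbf{P}^{(0,0)}$, $(Y_n)$ is the Markov chain on $\mathbb{R}$ with $Y_0=0$ and transition density $p(x,y)=k(x,y)v(y)/(\lambda v(x))$. *)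

theory Defs
  imports "HOL-Analysis.Analysis"
begin

definition L2 :: "(real \<Rightarrow> real) \<Rightarrow> bool" where
  "L2 f \<longleftrightarrow> f \<in> borel_measurable lborel \<and> integrable lborel (\<lambda>x. (f x)\<^sup>2)"

definition l2norm :: "(real \<Rightarrow> real) \<Rightarrow> real" where
  "l2norm f = sqrt (\<integral>x. (f x)\<^sup>2 \<partial>lborel)"

definition kernel_op :: "(real \<Rightarrow> real \<Rightarrow> real) \<Rightarrow> (real \<Rightarrow> real) \<Rightarrow> real \<Rightarrow> real" where
  "kernel_op k f x = (\<integral>y. k x y * f y \<partial>lborel)"

definition opnorm_L2 :: "((real \<Rightarrow> real) \<Rightarrow> (real \<Rightarrow> real)) \<Rightarrow> real" where
  "opnorm_L2 T = Sup {l2norm (T f) | f. L2 f \<and> l2norm f \<le> 1}"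

text \<open>Spectral radius on L^2, via Gelfand's formula r(T) = lim ||T^n||^(1/n).\<close>
definition spectral_radius_L2 :: "((real \<Rightarrow> real) \<Rightarrow> (real \<Rightarrow> real)) \<Rightarrow> real" where
  "spectral_radius_L2 T = lim (\<lambda>n. root (Suc n) (opnorm_L2 (T ^^ Suc n)))"

text \<open>Expectation E^x(f(Y_n)) for a Markov chain on R with transition density p,
  for nonnegative f: iterated one-step integration (P^n f)(x).\<close>
fun chain_expect :: "(real \<Rightarrow> real \<Rightarrow> real) \<Rightarrow> nat \<Rightarrow> (real \<Rightarrow> ennreal) \<Rightarrow> real \<Rightarrow> ennreal" where
  "chain_expect p 0 f x = f x"
| "chain_expect p (Suc n) f x = (\<integral>\<^sup>+ y. ennreal (p x y) * chain_expect p n f y \<partial>lborel)"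

end

theory Submission
  imports Defs
begin

text \<open>
  The transition density of the chain is
  p(x,y) = e^{-V1(y)} e^{-V2(y-x)} v(y) / (\<lambda> v(x)), and the proof is a Foster--Lyapunov drift
  argument for F(y) = |y| + D / v(y). One has
  P|.|(x) \<le> e^{-inf V2} \<integral> |y| e^{-V1(y)} v(y) dy / (\<lambda> v(x)) and
  P(1/v)(x) = \<integral> e^{-V1(y)} e^{-V2(y-x)} dy / (\<lambda> v(x)); the last integral tends to 0 as |x| \<rightarrow> \<infinity>,
  since e^{-V1} vanishes at infinity while e^{-V2} has a finite first moment. Hence PF \<le> (3/4) F far
  from the origin, while on compacts v is bounded away from 0 (the eigen-equation propagates
  positivity in steps of \<gamma>), so PF \<le> (3/4) F + B everywhere and E F(Y_n) stays bounded.
  Finiteness of \<integral> |y| e^{-V1(y)} v(y) dy comes from the same smallness: inserting the eigen-equation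
  into the integral and exchanging the order of integration bounds it by half of itself plus a constant.
\<close>

lemma nn_integral_lborel_translate:
  fixes f :: "real \<Rightarrow> ennreal"
  assumes "f \<in> borel_measurable borel"
  shows "(\<integral>\<^sup>+y. f (y - x) \<partial>lborel) = (\<integral>\<^sup>+y. f y \<partial>lborel)"
  using nn_integral_real_affine[OF assms, of 1 "- x"] by simp

lemma nn_integral_lborel_reflect:
  fixes f :: "real \<Rightarrow> ennreal"
  assumes "f \<in> borel_measurable borel"
  shows "(\<integral>\<^sup>+y. f (x - y) \<partial>lborel) = (\<integral>\<^sup>+y. f y \<partial>lborel)"
  using nn_integral_real_affine[OF assms, of "- 1" x] by simp

lemma nn_integral_linear_combination:
  fixes F G :: "'a \<Rightarrow> real"
  assumes [measurable]: "F \<in> borel_measurable M" "G \<in> borel_measurable M"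
    and "\<And>y. 0 \<le> F y" "\<And>y. 0 \<le> G y" "0 \<le> K" "0 \<le> L"
  shows "(\<integral>\<^sup>+y. ennreal (K * F y + L * G y) \<partial>M)
     = ennreal K * (\<integral>\<^sup>+y. ennreal (F y) \<partial>M) + ennreal L * (\<integral>\<^sup>+y. ennreal (G y) \<partial>M)"
proof -
  have "(\<integral>\<^sup>+y. ennreal (K * F y + L * G y) \<partial>M)
     = (\<integral>\<^sup>+y. ennreal K * ennreal (F y) + ennreal L * ennreal (G y) \<partial>M)"
    using assms by (intro nn_integral_cong) (simp add: ennreal_plus[symmetric] ennreal_mult[symmetric] del: ennreal_plus)
  also have "\<dots> = ennreal K * (\<integral>\<^sup>+y. ennreal (F y) \<partial>M) + ennreal L * (\<integral>\<^sup>+y. ennreal (G y) \<partial>M)"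
    by (simp add: nn_integral_add nn_integral_cmult)
  finally show ?thesis .
qed

lemma ennreal_le_of_contraction:
  fixes x :: ennreal
  assumes "x < \<infinity>" and x: "x \<le> ennreal c * x + ennreal K" and "0 \<le> c" "c < 1" "0 \<le> K"
  shows "x \<le> ennreal (K / (1 - c))"
proof -
  obtain r where r: "x = ennreal r" "0 \<le> r"
    using \<open>x < \<infinity>\<close> by (cases x) auto
  have "ennreal c * ennreal r + ennreal K = ennreal (c * r + K)"
    using assms r by (simp add: ennreal_mult)
  moreover have "0 \<le> c * r + K" using assms r by simp
  ultimately have "r \<le> c * r + K"
    using x r by simp
  then have "r \<le> K / (1 - c)" using assms by (simp add: field_simps)
  then show ?thesis using r by (simp add: ennreal_leI)
qed

lemma mult_translate_le_moment_plus:
  fixes a b :: "real \<Rightarrow> real"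
  assumes "a y \<le> A" and far: "r \<le> \<bar>y\<bar> \<Longrightarrow> a y \<le> \<delta>"
    and "0 < R" "2 * r \<le> R" "R \<le> \<bar>x\<bar>" "0 \<le> A" "0 \<le> \<delta>" "0 \<le> b (y - x)"
  shows "a y * b (y - x) \<le> 2 * A / R * (\<bar>y - x\<bar> * b (y - x)) + \<delta> * b (y - x)"
proof (cases "R / 2 \<le> \<bar>y - x\<bar>")
  case True
  have "a y * b (y - x) \<le> A * b (y - x)"
    using assms by (simp add: mult_right_mono)
  also have "\<dots> \<le> A * (2 * \<bar>y - x\<bar> / R) * b (y - x)"
  proof -
    have "1 \<le> 2 * \<bar>y - x\<bar> / R" using True \<open>0 < R\<close> by (simp add: field_simps)
    from mult_right_mono[OF mult_left_mono[OF this \<open>0 \<le> A\<close>] \<open>0 \<le> b (y - x)\<close>] show ?thesis by simp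
  qed
  finally have "a y * b (y - x) \<le> 2 * A / R * (\<bar>y - x\<bar> * b (y - x))"
    by (simp add: mult_ac)
  moreover have "0 \<le> \<delta> * b (y - x)" using assms by simp
  ultimately show ?thesis by linarith
next
  case False
  then have "a y \<le> \<delta>" using assms by (intro far) linarith
  moreover have "0 \<le> 2 * A / R * (\<bar>y - x\<bar> * b (y - x))"
    using assms \<open>a y \<le> \<delta>\<close> by (simp add: zero_le_divide_iff)
  ultimately show ?thesis using assms by (simp add: mult_right_mono add_increasing)
qed

lemma nn_integral_translate_product_vanishes:
  fixes a b :: "real \<Rightarrow> real"
  assumes [measurable]: "a \<in> borel_measurable borel" "b \<in> borel_measurable borel"
    and a_nonneg: "\<And>y. 0 \<le> a y" and a_le: "\<And>y. a y \<le> A" and a_lim: "(a \<longlongrightarrow> 0) at_infinity"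
    and b_nonneg: "\<And>w. 0 \<le> b w"
    and b_mass: "(\<integral>\<^sup>+w. ennreal (b w) \<partial>lborel) < \<infinity>"
    and b_moment: "(\<integral>\<^sup>+w. ennreal (\<bar>w\<bar> * b w) \<partial>lborel) < \<infinity>"
    and "0 < \<epsilon>"
  shows "\<exists>R>0. \<forall>x. R \<le> \<bar>x\<bar> \<longrightarrow> (\<integral>\<^sup>+y. ennreal (a y * b (y - x)) \<partial>lborel) \<le> ennreal \<epsilon>"
proof -
  obtain G where G: "(\<integral>\<^sup>+w. ennreal (b w) \<partial>lborel) = ennreal G" "0 \<le> G"
    using b_mass by (cases "\<integral>\<^sup>+w. ennreal (b w) \<partial>lborel") auto
  obtain J where J: "(\<integral>\<^sup>+w. ennreal (\<bar>w\<bar> * b w) \<partial>lborel) = ennreal J" "0 \<le> J"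
    using b_moment by (cases "\<integral>\<^sup>+w. ennreal (\<bar>w\<bar> * b w) \<partial>lborel") auto
  have A: "0 \<le> A" using a_nonneg a_le order_trans by blast
  define \<delta> where "\<delta> = \<epsilon> / (2 * (G + 1))"
  have \<delta>: "0 < \<delta>" "\<delta> * G \<le> \<epsilon> / 2"
    using \<open>0 < \<epsilon>\<close> G(2) by (auto simp: \<delta>_def field_simps)
  have "eventually (\<lambda>y. a y < \<delta>) at_infinity"
    using order_tendstoD(2)[OF a_lim \<open>0 < \<delta>\<close>] .
  then obtain r where r: "\<And>y. r \<le> \<bar>y\<bar> \<Longrightarrow> a y \<le> \<delta>"
    unfolding eventually_at_infinity by (metis less_imp_le real_norm_def)
  define R where "R = max (max (2 * r) 1) (4 * A * J / \<epsilon>)"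
  have R: "0 < R" "2 * r \<le> R" "4 * A * J / \<epsilon> \<le> R"
    by (auto simp: R_def)
  define K where "K = 2 * A / R"
  have "4 * A * J \<le> \<epsilon> * R"
    using R(3) \<open>0 < \<epsilon>\<close> by (simp add: divide_le_eq mult.commute)
  then have K: "0 \<le> K" "K * J \<le> \<epsilon> / 2"
    using R(1) A by (simp_all add: K_def divide_le_eq)
  have "(\<integral>\<^sup>+y. ennreal (a y * b (y - x)) \<partial>lborel) \<le> ennreal \<epsilon>" if x: "R \<le> \<bar>x\<bar>" for x
  proof -
    have "(\<integral>\<^sup>+y. ennreal (a y * b (y - x)) \<partial>lborel)
        \<le> (\<integral>\<^sup>+y. ennreal (K * (\<bar>y - x\<bar> * b (y - x)) + \<delta> * b (y - x)) \<partial>lborel)"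
      unfolding K_def using a_le r R x A \<delta> b_nonneg
      by (intro nn_integral_mono ennreal_leI mult_translate_le_moment_plus) auto
    also have "\<dots> = ennreal K * (\<integral>\<^sup>+y. ennreal (\<bar>y - x\<bar> * b (y - x)) \<partial>lborel)
        + ennreal \<delta> * (\<integral>\<^sup>+y. ennreal (b (y - x)) \<partial>lborel)"
      using K \<delta> b_nonneg by (intro nn_integral_linear_combination) auto
    also have "\<dots> = ennreal (K * J + \<delta> * G)"
      using K \<delta> G J
        nn_integral_lborel_translate[of "\<lambda>w. ennreal (\<bar>w\<bar> * b w)" x]
        nn_integral_lborel_translate[of "\<lambda>w. ennreal (b w)" x]
      by (simp add: ennreal_mult)
    also have "\<dots> \<le> ennreal \<epsilon>" using K \<delta> by (intro ennreal_leI) simp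
    finally show ?thesis .
  qed
  then show ?thesis using R(1) by blast
qed

lemma chain_expect_mono:
  "(\<And>y. f y \<le> g y) \<Longrightarrow> chain_expect p n f x \<le> chain_expect p n g x"
  by (induction n arbitrary: x) (auto intro!: nn_integral_mono mult_left_mono)

lemma chain_expect_drift:
  fixes F :: "real \<Rightarrow> real"
  assumes [measurable]: "\<And>x. (\<lambda>y. ennreal (p x y)) \<in> borel_measurable borel"
    and [measurable]: "F \<in> borel_measurable borel" and F_nonneg: "\<And>y. 0 \<le> F y"
    and mass_one: "\<And>x. (\<integral>\<^sup>+y. ennreal (p x y) \<partial>lborel) = 1"
    and drift: "\<And>x. (\<integral>\<^sup>+y. ennreal (p x y) * ennreal (F y) \<partial>lborel) \<le> ennreal (c * F x + B)"
    and "0 \<le> c" "0 \<le> B"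
  shows "chain_expect p n (\<lambda>y. ennreal (F y)) x \<le> ennreal (c ^ n * F x + B * (\<Sum>i<n. c ^ i))"
proof (induction n arbitrary: x)
  case 0
  then show ?case by simp
next
  case (Suc n)
  define S where "S = B * (\<Sum>i<n. c ^ i)"
  have S: "0 \<le> S" unfolding S_def using assms by (simp add: sum_nonneg)
  have "chain_expect p (Suc n) (\<lambda>y. ennreal (F y)) x
      \<le> (\<integral>\<^sup>+y. ennreal (p x y) * ennreal (c ^ n * F y + S) \<partial>lborel)"
    using Suc unfolding S_def by (auto intro!: nn_integral_mono mult_left_mono)
  also have "\<dots> = (\<integral>\<^sup>+y. ennreal (c ^ n) * (ennreal (p x y) * ennreal (F y)) + ennreal S * ennreal (p x y) \<partial>lborel)"
    using assms S by (intro nn_integral_cong) (simp add: ennreal_mult distrib_left mult_ac)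
  also have "\<dots> = ennreal (c ^ n) * (\<integral>\<^sup>+y. ennreal (p x y) * ennreal (F y) \<partial>lborel) + ennreal S"
    by (simp add: nn_integral_add nn_integral_cmult mass_one)
  also have "\<dots> \<le> ennreal (c ^ n) * ennreal (c * F x + B) + ennreal S"
    using drift by (intro add_right_mono mult_left_mono) auto
  also have "\<dots> = ennreal (c ^ Suc n * F x + B * (\<Sum>i<Suc n. c ^ i))"
    using assms F_nonneg[of x] S by (simp add: S_def ennreal_mult[symmetric] algebra_simps)
  finally show ?case .
qed

lemma chain_expect_drift_bounded:
  fixes F :: "real \<Rightarrow> real"
  assumes "\<And>x. (\<lambda>y. ennreal (p x y)) \<in> borel_measurable borel"
    and "F \<in> borel_measurable borel" and F_nonneg: "\<And>y. 0 \<le> F y"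
    and "\<And>x. (\<integral>\<^sup>+y. ennreal (p x y) \<partial>lborel) = 1"
    and "\<And>x. (\<integral>\<^sup>+y. ennreal (p x y) * ennreal (F y) \<partial>lborel) \<le> ennreal (c * F x + B)"
    and c: "0 \<le> c" "c < 1" and B: "0 \<le> B"
  shows "chain_expect p n (\<lambda>y. ennreal (F y)) x \<le> ennreal (F x + B / (1 - c))"
proof -
  have "c ^ n * F x \<le> F x"
    using c F_nonneg[of x] by (simp add: mult_left_le_one_le power_le_one)
  moreover have "(\<Sum>i<n. c ^ i) \<le> 1 / (1 - c)"
    using c by (simp add: sum_gp_strict divide_right_mono)
  then have "B * (\<Sum>i<n. c ^ i) \<le> B / (1 - c)"
    using B by (metis mult_left_mono times_divide_eq_right mult.right_neutral)
  ultimately have "c ^ n * F x + B * (\<Sum>i<n. c ^ i) \<le> F x + B / (1 - c)" by simp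
  then show ?thesis
    using chain_expect_drift[OF assms(1-5) c(1) B, of n x] order_trans ennreal_leI by blast
qed

lemma nn_integral_interval_pos:
  fixes f :: "real \<Rightarrow> real"
  assumes [measurable]: "f \<in> borel_measurable borel" and "\<And>y. 0 < f y" and "a < b"
  shows "0 < (\<integral>\<^sup>+y. ennreal (f y) * indicator {a..b} y \<partial>lborel)"
proof (rule ccontr)
  assume "\<not> ?thesis"
  then have "(\<integral>\<^sup>+y. ennreal (f y) * indicator {a..b} y \<partial>lborel) = 0"
    by (simp add: not_less)
  then have "AE y in lborel. ennreal (f y) * indicator {a..b} y = 0"
    by (subst (asm) nn_integral_0_iff_AE) auto
  moreover have "{y \<in> space lborel. ennreal (f y) * indicator {a..b} y \<noteq> 0} = {a..b}"
    using assms(2) by (auto simp: indicator_def ennreal_eq_0_iff not_le)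
  ultimately have "emeasure lborel {a..b} = 0"
    by (subst (asm) AE_iff_measurable) auto
  then show False using \<open>a < b\<close> by simp
qed

locale kernel_eigenfunction =
  fixes V1 V2 v :: "real \<Rightarrow> real" and lam \<gamma> c1 c2 C\<gamma> :: real
  assumes V1_measurable[measurable]: "V1 \<in> borel_measurable borel"
    and V2_measurable[measurable]: "V2 \<in> borel_measurable borel"
    and v_measurable[measurable]: "v \<in> borel_measurable borel"
    and V1_ge: "\<And>x. c1 \<le> V1 x"
    and V2_ge: "\<And>x. c2 \<le> V2 x"
    and gamma_pos: "0 < \<gamma>"
    and V2_le: "\<And>x. x \<in> {-\<gamma>..\<gamma>} \<Longrightarrow> V2 x \<le> C\<gamma>"
    and V1_at_infinity: "filterlim V1 at_top at_infinity"
    and exp_V1_square_integrable: "integrable lborel (\<lambda>x. exp (- 2 * V1 x))"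
    and exp_V2_moment_integrable: "integrable lborel (\<lambda>x. \<bar>x\<bar> * exp (- V2 x))"
    and lam_pos: "0 < lam"
    and v_pos: "\<And>x. 0 < v x"
    and v_square_integrable: "integrable lborel (\<lambda>x. (v x)\<^sup>2)"
    and v_eigen: "\<And>x. v x = 1 / lam * (\<integral>y. exp (- V1 y - V2 (y - x)) * v y \<partial>lborel)"
begin

lemma exp_V1_le: "exp (- V1 y) \<le> exp (- c1)"
  using V1_ge[of y] by simp

lemma exp_V2_le: "exp (- V2 y) \<le> exp (- c2)"
  using V2_ge[of y] by simp

lemma exp_V1_v_nonneg: "0 \<le> exp (- V1 y) * v y"
  using v_pos[of y] by simp

lemma exp_V2_moment_finite: "(\<integral>\<^sup>+w. ennreal (\<bar>w\<bar> * exp (- V2 w)) \<partial>lborel) < \<infinity>"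
  using integrableD(2)[OF exp_V2_moment_integrable] by (simp add: top.not_eq_extremum)

lemma exp_V2_mass_finite: "(\<integral>\<^sup>+w. ennreal (exp (- V2 w)) \<partial>lborel) < \<infinity>"
proof -
  have "(\<integral>\<^sup>+w. ennreal (exp (- V2 w)) \<partial>lborel)
      \<le> (\<integral>\<^sup>+w. ennreal (exp (- c2)) * indicator {-1..1} w + ennreal (\<bar>w\<bar> * exp (- V2 w)) \<partial>lborel)"
  proof (rule nn_integral_mono)
    fix w
    show "ennreal (exp (- V2 w)) \<le> ennreal (exp (- c2)) * indicator {-1..1} w + ennreal (\<bar>w\<bar> * exp (- V2 w))"
    proof (cases "w \<in> {-1..1}")
      case True
      then show ?thesis using exp_V2_le[of w] by (simp add: add_increasing2)
    next
      case False
      then have "1 \<le> \<bar>w\<bar>" by auto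
      then have "exp (- V2 w) \<le> \<bar>w\<bar> * exp (- V2 w)" by simp
      then show ?thesis using False by simp
    qed
  qed
  also have "\<dots> = ennreal (exp (- c2)) * 2 + (\<integral>\<^sup>+w. ennreal (\<bar>w\<bar> * exp (- V2 w)) \<partial>lborel)"
    by (subst nn_integral_add) (auto simp: nn_integral_cmult_indicator)
  also have "\<dots> < \<infinity>" using exp_V2_moment_finite by (simp add: ennreal_mult_less_top)
  finally show ?thesis .
qed

lemma exp_V1_v_mass_finite: "(\<integral>\<^sup>+y. ennreal (exp (- V1 y) * v y) \<partial>lborel) < \<infinity>"
proof -
  have "exp (- V1 y) * v y \<le> exp (- 2 * V1 y) + (v y)\<^sup>2" for y
  proof -
    have "exp (- 2 * V1 y) = (exp (- V1 y))\<^sup>2" by (simp add: exp_double[symmetric])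
    moreover have "0 < exp (- V1 y) * v y" using v_pos[of y] by simp
    ultimately show ?thesis using sum_squares_bound[of "exp (- V1 y)" "v y"] by (simp add: mult.assoc)
  qed
  then have "(\<integral>\<^sup>+y. ennreal (exp (- V1 y) * v y) \<partial>lborel)
      \<le> (\<integral>\<^sup>+y. ennreal (exp (- 2 * V1 y)) + ennreal ((v y)\<^sup>2) \<partial>lborel)"
    by (intro nn_integral_mono) (simp add: ennreal_plus[symmetric] del: ennreal_plus)
  also have "\<dots> = (\<integral>\<^sup>+y. ennreal (exp (- 2 * V1 y)) \<partial>lborel) + (\<integral>\<^sup>+y. ennreal ((v y)\<^sup>2) \<partial>lborel)"
    by (rule nn_integral_add) auto
  also have "\<dots> < \<infinity>"
    using integrableD(2)[OF exp_V1_square_integrable] integrableD(2)[OF v_square_integrable]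
    by (simp add: top.not_eq_extremum)
  finally show ?thesis .
qed

definition "exp_V2_mass = enn2real (\<integral>\<^sup>+w. ennreal (exp (- V2 w)) \<partial>lborel)"
definition "exp_V2_moment = enn2real (\<integral>\<^sup>+w. ennreal (\<bar>w\<bar> * exp (- V2 w)) \<partial>lborel)"
definition "exp_V1_v_mass = enn2real (\<integral>\<^sup>+y. ennreal (exp (- V1 y) * v y) \<partial>lborel)"

lemma nn_integral_exp_V2: "(\<integral>\<^sup>+w. ennreal (exp (- V2 w)) \<partial>lborel) = ennreal exp_V2_mass"
  using exp_V2_mass_finite by (simp add: exp_V2_mass_def)

lemma nn_integral_exp_V2_moment: "(\<integral>\<^sup>+w. ennreal (\<bar>w\<bar> * exp (- V2 w)) \<partial>lborel) = ennreal exp_V2_moment"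
  using exp_V2_moment_finite by (simp add: exp_V2_moment_def)

lemma nn_integral_exp_V1_v: "(\<integral>\<^sup>+y. ennreal (exp (- V1 y) * v y) \<partial>lborel) = ennreal exp_V1_v_mass"
  using exp_V1_v_mass_finite by (simp add: exp_V1_v_mass_def)

lemma masses_nonneg: "0 \<le> exp_V2_mass" "0 \<le> exp_V2_moment" "0 \<le> exp_V1_v_mass"
  by (simp_all add: exp_V2_mass_def exp_V2_moment_def exp_V1_v_mass_def)

lemma eigen_equation:
  "ennreal (lam * v x) = (\<integral>\<^sup>+y. ennreal (exp (- V1 y) * exp (- V2 (y - x)) * v y) \<partial>lborel)"
proof -
  have "(\<integral>\<^sup>+y. ennreal (exp (- V1 y) * exp (- V2 (y - x)) * v y) \<partial>lborel)
      \<le> (\<integral>\<^sup>+y. ennreal (exp (- c2)) * ennreal (exp (- V1 y) * v y) \<partial>lborel)"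
    using exp_V2_le v_pos
    by (intro nn_integral_mono) (simp add: ennreal_mult[symmetric] less_imp_le mult_right_mono mult_ac)
  also have "\<dots> < \<infinity>"
    using exp_V1_v_mass_finite by (simp add: nn_integral_cmult ennreal_mult_less_top)
  finally have "integrable lborel (\<lambda>y. exp (- V1 y) * exp (- V2 (y - x)) * v y)"
    using v_pos by (intro integrableI_nonneg) (auto intro!: less_imp_le)
  moreover have "lam * v x = (\<integral>y. exp (- V1 y) * exp (- V2 (y - x)) * v y \<partial>lborel)"
    using v_eigen[of x] lam_pos by (simp add: exp_diff exp_minus field_simps)
  ultimately show ?thesis
    using v_pos by (simp add: nn_integral_eq_integral less_imp_le)
qed

lemma overlap_le:
  "(\<integral>\<^sup>+y. ennreal (exp (- V1 y) * exp (- V2 (y - x))) \<partial>lborel) \<le> ennreal (exp (- c1) * exp_V2_mass)"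
proof -
  have "(\<integral>\<^sup>+y. ennreal (exp (- V1 y) * exp (- V2 (y - x))) \<partial>lborel)
      \<le> (\<integral>\<^sup>+y. ennreal (exp (- c1)) * ennreal (exp (- V2 (y - x))) \<partial>lborel)"
    using exp_V1_le by (intro nn_integral_mono) (simp add: ennreal_mult[symmetric] mult_right_mono)
  also have "\<dots> = ennreal (exp (- c1) * exp_V2_mass)"
    using nn_integral_lborel_translate[of "\<lambda>w. ennreal (exp (- V2 w))" x]
    using masses_nonneg by (simp add: nn_integral_cmult nn_integral_exp_V2 ennreal_mult)
  finally show ?thesis .
qed

lemma overlap_reflected_le:
  "(\<integral>\<^sup>+y. ennreal (exp (- V1 y) * exp (- V2 (x - y))) \<partial>lborel) \<le> ennreal (exp (- c1) * exp_V2_mass)"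
proof -
  have "(\<integral>\<^sup>+y. ennreal (exp (- V1 y) * exp (- V2 (x - y))) \<partial>lborel)
      \<le> (\<integral>\<^sup>+y. ennreal (exp (- c1)) * ennreal (exp (- V2 (x - y))) \<partial>lborel)"
    using exp_V1_le by (intro nn_integral_mono) (simp add: ennreal_mult[symmetric] mult_right_mono)
  also have "\<dots> = ennreal (exp (- c1) * exp_V2_mass)"
    using nn_integral_lborel_reflect[of "\<lambda>w. ennreal (exp (- V2 w))" x]
    using masses_nonneg by (simp add: nn_integral_cmult nn_integral_exp_V2 ennreal_mult)
  finally show ?thesis .
qed

lemma overlaps_small:
  "\<exists>R>0. \<forall>x. R \<le> \<bar>x\<bar> \<longrightarrow>
     (\<integral>\<^sup>+y. ennreal (exp (- V1 y) * exp (- V2 (y - x))) \<partial>lborel) \<le> ennreal (lam / 2) \<and>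
     (\<integral>\<^sup>+y. ennreal (exp (- V1 y) * exp (- V2 (x - y))) \<partial>lborel) \<le> ennreal (lam / 2)"
proof -
  have exp_V1_lim: "((\<lambda>y. exp (- V1 y)) \<longlongrightarrow> 0) at_infinity"
    using filterlim_compose[OF exp_at_bot] V1_at_infinity by (simp add: filterlim_uminus_at_top)
  have reflected: "(\<integral>\<^sup>+w. f (- w) \<partial>lborel) = (\<integral>\<^sup>+w. f w \<partial>lborel)"
    if "f \<in> borel_measurable borel" for f :: "real \<Rightarrow> ennreal"
    using nn_integral_lborel_reflect[OF that, of 0] by simp
  have "\<exists>R>0. \<forall>x. R \<le> \<bar>x\<bar> \<longrightarrow>
      (\<integral>\<^sup>+y. ennreal (exp (- V1 y) * exp (- V2 (y - x))) \<partial>lborel) \<le> ennreal (lam / 2)"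
    using exp_V1_le exp_V1_lim exp_V2_mass_finite exp_V2_moment_finite lam_pos
    by (intro nn_integral_translate_product_vanishes[where A = "exp (- c1)"]) auto
  then obtain R1 where "R1 > 0" and R1: "\<And>x. R1 \<le> \<bar>x\<bar> \<Longrightarrow>
      (\<integral>\<^sup>+y. ennreal (exp (- V1 y) * exp (- V2 (y - x))) \<partial>lborel) \<le> ennreal (lam / 2)"
    by blast
  have "\<exists>R>0. \<forall>x. R \<le> \<bar>x\<bar> \<longrightarrow>
      (\<integral>\<^sup>+y. ennreal (exp (- V1 y) * exp (- V2 (- (y - x)))) \<partial>lborel) \<le> ennreal (lam / 2)"
    using exp_V1_le exp_V1_lim lam_pos
      exp_V2_mass_finite reflected[of "\<lambda>w. ennreal (exp (- V2 w))"]
      exp_V2_moment_finite reflected[of "\<lambda>w. ennreal (\<bar>w\<bar> * exp (- V2 w))"]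
    by (intro nn_integral_translate_product_vanishes[where A = "exp (- c1)" and b = "\<lambda>w. exp (- V2 (- w))"]) auto
  then obtain R2 where R2: "\<And>x. R2 \<le> \<bar>x\<bar> \<Longrightarrow>
      (\<integral>\<^sup>+y. ennreal (exp (- V1 y) * exp (- V2 (- (y - x)))) \<partial>lborel) \<le> ennreal (lam / 2)"
    by blast
  show ?thesis
    using \<open>R1 > 0\<close> R1 R2 by (intro exI[of _ "max R1 R2"]) auto
qed

lemma scaled_overlap_reflected_le:
  assumes "0 < R"
    and small: "\<And>z. R \<le> \<bar>z\<bar> \<Longrightarrow> (\<integral>\<^sup>+y. ennreal (exp (- V1 y) * exp (- V2 (z - y))) \<partial>lborel) \<le> ennreal (lam / 2)"
    and "0 \<le> s" "s \<le> \<bar>z\<bar>"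
  shows "ennreal s * (\<integral>\<^sup>+y. ennreal (exp (- V1 y) * exp (- V2 (z - y))) \<partial>lborel)
      \<le> ennreal (s * (lam / 2) + R * exp (- c1) * exp_V2_mass)"
proof (cases "R \<le> \<bar>z\<bar>")
  case True
  then have "ennreal s * (\<integral>\<^sup>+y. ennreal (exp (- V1 y) * exp (- V2 (z - y))) \<partial>lborel) \<le> ennreal s * ennreal (lam / 2)"
    by (intro mult_left_mono small) auto
  also have "\<dots> \<le> ennreal (s * (lam / 2) + R * exp (- c1) * exp_V2_mass)"
    using assms lam_pos masses_nonneg by (simp add: ennreal_mult[symmetric] ennreal_leI)
  finally show ?thesis .
next
  case False
  have "ennreal s * (\<integral>\<^sup>+y. ennreal (exp (- V1 y) * exp (- V2 (z - y))) \<partial>lborel)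
      \<le> ennreal s * ennreal (exp (- c1) * exp_V2_mass)"
    by (intro mult_left_mono overlap_reflected_le) auto
  also have "\<dots> \<le> ennreal (s * (lam / 2) + R * exp (- c1) * exp_V2_mass)"
  proof -
    have "s * (exp (- c1) * exp_V2_mass) \<le> R * (exp (- c1) * exp_V2_mass)"
      using False assms masses_nonneg by (intro mult_right_mono) auto
    moreover have "0 \<le> s * (lam / 2)" using assms lam_pos by simp
    ultimately have "s * (exp (- c1) * exp_V2_mass) \<le> s * (lam / 2) + R * exp (- c1) * exp_V2_mass"
      unfolding mult.assoc by linarith
    moreover have "ennreal s * ennreal (exp (- c1) * exp_V2_mass) = ennreal (s * (exp (- c1) * exp_V2_mass))"
      using assms masses_nonneg by (simp add: ennreal_mult)
    ultimately show ?thesis by (metis ennreal_leI)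
  qed
  finally show ?thesis .
qed

lemma weighted_overlap_le:
  assumes "0 < R"
    and small: "\<And>z. R \<le> \<bar>z\<bar> \<Longrightarrow> (\<integral>\<^sup>+y. ennreal (exp (- V1 y) * exp (- V2 (z - y))) \<partial>lborel) \<le> ennreal (lam / 2)"
    and [measurable]: "m \<in> borel_measurable borel"
    and m_nonneg: "\<And>y. 0 \<le> m y" and m_le: "\<And>y. m y \<le> \<bar>y\<bar>"
    and m_lipschitz: "\<And>y z. m y \<le> m z + \<bar>z - y\<bar>"
  shows "(\<integral>\<^sup>+y. ennreal (m y * (exp (- V1 y) * exp (- V2 (z - y)))) \<partial>lborel)
      \<le> ennreal (m z * (lam / 2) + R * exp (- c1) * exp_V2_mass + exp (- c1) * exp_V2_moment)"
proof -
  let ?overlap = "\<integral>\<^sup>+y. ennreal (exp (- V1 y) * exp (- V2 (z - y))) \<partial>lborel"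
  have "m y * (exp (- V1 y) * exp (- V2 (z - y)))
      \<le> m z * (exp (- V1 y) * exp (- V2 (z - y))) + exp (- c1) * (\<bar>z - y\<bar> * exp (- V2 (z - y)))" for y
  proof -
    have "m y * (exp (- V1 y) * exp (- V2 (z - y)))
        \<le> m z * (exp (- V1 y) * exp (- V2 (z - y))) + \<bar>z - y\<bar> * exp (- V2 (z - y)) * exp (- V1 y)"
      using mult_right_mono[OF m_lipschitz[of y z], of "exp (- V1 y) * exp (- V2 (z - y))"]
      by (simp add: algebra_simps)
    also have "\<dots> \<le> m z * (exp (- V1 y) * exp (- V2 (z - y))) + \<bar>z - y\<bar> * exp (- V2 (z - y)) * exp (- c1)"
      using exp_V1_le by (intro add_left_mono mult_left_mono) auto
    finally show ?thesis by (simp add: mult_ac)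
  qed
  then have "(\<integral>\<^sup>+y. ennreal (m y * (exp (- V1 y) * exp (- V2 (z - y)))) \<partial>lborel)
      \<le> (\<integral>\<^sup>+y. ennreal (m z * (exp (- V1 y) * exp (- V2 (z - y))) + exp (- c1) * (\<bar>z - y\<bar> * exp (- V2 (z - y)))) \<partial>lborel)"
    by (intro nn_integral_mono ennreal_leI)
  also have "\<dots> = ennreal (m z) * ?overlap
      + ennreal (exp (- c1)) * (\<integral>\<^sup>+y. ennreal (\<bar>z - y\<bar> * exp (- V2 (z - y))) \<partial>lborel)"
    using m_nonneg by (intro nn_integral_linear_combination) auto
  also have "(\<integral>\<^sup>+y. ennreal (\<bar>z - y\<bar> * exp (- V2 (z - y))) \<partial>lborel) = ennreal exp_V2_moment"
    unfolding nn_integral_exp_V2_moment[symmetric] by (rule nn_integral_lborel_reflect) measurable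
  also have "ennreal (exp (- c1)) * ennreal exp_V2_moment = ennreal (exp (- c1) * exp_V2_moment)"
    using masses_nonneg by (simp add: ennreal_mult)
  also have "ennreal (m z) * ?overlap \<le> ennreal (m z * (lam / 2) + R * exp (- c1) * exp_V2_mass)"
    using m_nonneg m_le by (intro scaled_overlap_reflected_le[OF \<open>0 < R\<close> small])
  finally show ?thesis
    using m_nonneg[of z] lam_pos \<open>0 < R\<close> masses_nonneg by (simp add: ennreal_plus[symmetric] del: ennreal_plus)
qed

lemma weighted_mass_eq:
  assumes [measurable]: "m \<in> borel_measurable borel" and m_nonneg: "\<And>y. 0 \<le> m y"
  shows "(\<integral>\<^sup>+y. ennreal (m y * (exp (- V1 y) * v y)) \<partial>lborel)
    = (\<integral>\<^sup>+z. ennreal (exp (- V1 z) * v z / lam)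
          * (\<integral>\<^sup>+y. ennreal (m y * (exp (- V1 y) * exp (- V2 (z - y)))) \<partial>lborel) \<partial>lborel)"
proof -
  let ?k = "\<lambda>y z. ennreal (m y * exp (- V1 y) / lam) * ennreal (exp (- V1 z) * exp (- V2 (z - y)) * v z)"
  have "ennreal (m y * (exp (- V1 y) * v y)) = ennreal (m y * exp (- V1 y) / lam) * ennreal (lam * v y)" for y
    using lam_pos m_nonneg[of y] v_pos[of y] by (simp add: ennreal_mult[symmetric] less_imp_le)
  then have "(\<integral>\<^sup>+y. ennreal (m y * (exp (- V1 y) * v y)) \<partial>lborel) = (\<integral>\<^sup>+y. \<integral>\<^sup>+z. ?k y z \<partial>lborel \<partial>lborel)"
    by (simp add: eigen_equation nn_integral_cmult)
  also have "\<dots> = (\<integral>\<^sup>+z. \<integral>\<^sup>+y. ?k y z \<partial>lborel \<partial>lborel)"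
    by (rule lborel_pair.Fubini') measurable
  also have "\<dots> = (\<integral>\<^sup>+z. ennreal (exp (- V1 z) * v z / lam)
          * (\<integral>\<^sup>+y. ennreal (m y * (exp (- V1 y) * exp (- V2 (z - y)))) \<partial>lborel) \<partial>lborel)"
    using m_nonneg lam_pos v_pos
    by (subst nn_integral_cmult[symmetric])
      (auto intro!: nn_integral_cong simp: ennreal_mult[symmetric] less_imp_le field_simps)
  finally show ?thesis .
qed

lemma weighted_mass_contraction:
  assumes "0 < R"
    and small: "\<And>z. R \<le> \<bar>z\<bar> \<Longrightarrow> (\<integral>\<^sup>+y. ennreal (exp (- V1 y) * exp (- V2 (z - y))) \<partial>lborel) \<le> ennreal (lam / 2)"
    and [measurable]: "m \<in> borel_measurable borel"
    and m_nonneg: "\<And>y. 0 \<le> m y" and m_le: "\<And>y. m y \<le> \<bar>y\<bar>"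
    and m_lipschitz: "\<And>y z. m y \<le> m z + \<bar>z - y\<bar>"
  defines "K \<equiv> (R * exp (- c1) * exp_V2_mass + exp (- c1) * exp_V2_moment) / lam"
  shows "(\<integral>\<^sup>+y. ennreal (m y * (exp (- V1 y) * v y)) \<partial>lborel)
      \<le> ennreal (1 / 2) * (\<integral>\<^sup>+y. ennreal (m y * (exp (- V1 y) * v y)) \<partial>lborel) + ennreal (K * exp_V1_v_mass)"
proof -
  have K: "0 \<le> K" using \<open>0 < R\<close> lam_pos masses_nonneg by (simp add: K_def)
  have h_nonneg: "0 \<le> exp (- V1 z) * v z / lam" for z using v_pos[of z] lam_pos by (simp add: less_imp_le)
  have "(\<integral>\<^sup>+y. ennreal (m y * (exp (- V1 y) * v y)) \<partial>lborel)
      \<le> (\<integral>\<^sup>+z. ennreal (exp (- V1 z) * v z / lam)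
          * ennreal (m z * (lam / 2) + R * exp (- c1) * exp_V2_mass + exp (- c1) * exp_V2_moment) \<partial>lborel)"
    unfolding weighted_mass_eq[OF assms(3) m_nonneg]
    by (intro nn_integral_mono mult_left_mono weighted_overlap_le[OF \<open>0 < R\<close> small])
      (use m_nonneg m_le m_lipschitz in auto)
  also have "\<dots> = (\<integral>\<^sup>+z. ennreal (1 / 2 * (m z * (exp (- V1 z) * v z)) + K * (exp (- V1 z) * v z)) \<partial>lborel)"
    using h_nonneg m_nonneg lam_pos masses_nonneg \<open>0 < R\<close>
    by (intro nn_integral_cong, subst ennreal_mult[symmetric]) (auto simp: K_def field_simps)
  also have "\<dots> = ennreal (1 / 2) * (\<integral>\<^sup>+y. ennreal (m y * (exp (- V1 y) * v y)) \<partial>lborel) + ennreal K * ennreal exp_V1_v_mass"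
    unfolding nn_integral_exp_V1_v[symmetric] using m_nonneg exp_V1_v_nonneg K
    by (intro nn_integral_linear_combination) auto
  also have "ennreal K * ennreal exp_V1_v_mass = ennreal (K * exp_V1_v_mass)"
    using K masses_nonneg by (simp add: ennreal_mult)
  finally show ?thesis .
qed

lemma abs_moment_exp_V1_v_finite:
  "(\<integral>\<^sup>+y. ennreal (\<bar>y\<bar> * (exp (- V1 y) * v y)) \<partial>lborel) < \<infinity>"
proof -
  obtain R where "0 < R" and small: "\<And>z. R \<le> \<bar>z\<bar> \<Longrightarrow>
      (\<integral>\<^sup>+y. ennreal (exp (- V1 y) * exp (- V2 (z - y))) \<partial>lborel) \<le> ennreal (lam / 2)"
    using overlaps_small by blast
  define K where "K = (R * exp (- c1) * exp_V2_mass + exp (- c1) * exp_V2_moment) / lam"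
  have K: "0 \<le> K * exp_V1_v_mass" using \<open>0 < R\<close> lam_pos masses_nonneg by (simp add: K_def)
  \<comment> \<open>The truncated weights give finite integrals, so the contraction can be solved for them.\<close>
  define f where "f N y = ennreal (min \<bar>y\<bar> (real N) * (exp (- V1 y) * v y))" for N :: nat and y
  have truncated: "integral\<^sup>N lborel (f N) \<le> ennreal (K * exp_V1_v_mass / (1 - 1 / 2))" for N
  proof (rule ennreal_le_of_contraction)
    have "integral\<^sup>N lborel (f N) \<le> (\<integral>\<^sup>+y. ennreal (real N) * ennreal (exp (- V1 y) * v y) \<partial>lborel)"
      unfolding f_def using v_pos
      by (intro nn_integral_mono) (simp add: ennreal_mult[symmetric] less_imp_le mult_right_mono)
    also have "\<dots> < \<infinity>"
      using exp_V1_v_mass_finite by (simp add: nn_integral_cmult ennreal_mult_less_top)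
    finally show "integral\<^sup>N lborel (f N) < \<infinity>" .
    show "integral\<^sup>N lborel (f N) \<le> ennreal (1 / 2) * integral\<^sup>N lborel (f N) + ennreal (K * exp_V1_v_mass)"
      unfolding f_def K_def by (rule weighted_mass_contraction[OF \<open>0 < R\<close> small]) auto
  qed (use K exp_V1_v_nonneg in auto)
  have incseq: "incseq f"
    using v_pos[THEN less_imp_le] by (intro incseq_SucI le_funI) (auto simp: f_def intro!: ennreal_leI mult_right_mono)
  have sup: "(SUP N. f N y) = ennreal (\<bar>y\<bar> * (exp (- V1 y) * v y))" for y
  proof (rule antisym)
    show "(SUP N. f N y) \<le> ennreal (\<bar>y\<bar> * (exp (- V1 y) * v y))"
      using v_pos[THEN less_imp_le] by (auto simp: f_def intro!: SUP_least ennreal_leI mult_right_mono)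
    have "f (nat \<lceil>\<bar>y\<bar>\<rceil>) y = ennreal (\<bar>y\<bar> * (exp (- V1 y) * v y))"
      by (simp add: f_def min_def)
    then show "ennreal (\<bar>y\<bar> * (exp (- V1 y) * v y)) \<le> (SUP N. f N y)"
      by (metis UNIV_I SUP_upper)
  qed
  have "(\<integral>\<^sup>+y. ennreal (\<bar>y\<bar> * (exp (- V1 y) * v y)) \<partial>lborel) = (\<integral>\<^sup>+y. (SUP N. f N y) \<partial>lborel)"
    by (simp add: sup)
  also have "\<dots> = (SUP N. integral\<^sup>N lborel (f N))"
    by (rule nn_integral_monotone_convergence_SUP[OF incseq]) (unfold f_def, measurable)
  also have "\<dots> \<le> ennreal (K * exp_V1_v_mass / (1 - 1 / 2))"
    by (intro SUP_least truncated)
  also have "\<dots> < \<infinity>" by simp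
  finally show ?thesis .
qed

text \<open>On [a, a + \<gamma>] the kernel factor e^{-V2(y-x)} is at least e^{-C\<gamma>}, so the eigen-equation bounds
  v from below there by the (positive) mass of e^{-V1} v on that interval.\<close>
lemma v_lower_bound_on_interval: "\<exists>\<mu>>0. \<forall>x. a \<le> x \<and> x \<le> a + \<gamma> \<longrightarrow> \<mu> \<le> v x"
proof -
  define P where "P = (\<integral>\<^sup>+y. ennreal (exp (- C\<gamma>) * (exp (- V1 y) * v y)) * indicator {a..a + \<gamma>} y \<partial>lborel)"
  have "0 < P"
    unfolding P_def using gamma_pos v_pos by (intro nn_integral_interval_pos) auto
  have "P \<le> (\<integral>\<^sup>+y. ennreal (exp (- C\<gamma>)) * ennreal (exp (- V1 y) * v y) \<partial>lborel)"
    unfolding P_def using exp_V1_v_nonneg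
    by (intro nn_integral_mono) (auto simp: indicator_def ennreal_mult)
  also have "\<dots> < \<infinity>"
    using exp_V1_v_mass_finite by (simp add: nn_integral_cmult ennreal_mult_less_top)
  finally obtain p where p: "P = ennreal p" "0 \<le> p"
    by (cases P) auto
  have "p / lam \<le> v x" if x: "a \<le> x" "x \<le> a + \<gamma>" for x
  proof -
    have "P \<le> (\<integral>\<^sup>+y. ennreal (exp (- V1 y) * exp (- V2 (y - x)) * v y) \<partial>lborel)"
      unfolding P_def
    proof (intro nn_integral_mono)
      fix y
      show "ennreal (exp (- C\<gamma>) * (exp (- V1 y) * v y)) * indicator {a..a + \<gamma>} y
          \<le> ennreal (exp (- V1 y) * exp (- V2 (y - x)) * v y)"
      proof (cases "y \<in> {a..a + \<gamma>}")
        case True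
        then have "V2 (y - x) \<le> C\<gamma>" using x by (intro V2_le) auto
        then have "exp (- C\<gamma>) * (exp (- V1 y) * v y) \<le> exp (- V2 (y - x)) * (exp (- V1 y) * v y)"
          using exp_V1_v_nonneg by (intro mult_right_mono) auto
        then show ?thesis using True by (simp add: ennreal_leI mult_ac)
      qed simp
    qed
    then have "p \<le> lam * v x"
      using p lam_pos v_pos[of x] by (simp add: eigen_equation[symmetric])
    then show ?thesis using lam_pos by (simp add: divide_le_eq mult.commute)
  qed
  moreover have "0 < p / lam" using \<open>0 < P\<close> p lam_pos by simp
  ultimately show ?thesis by blast
qed

lemma v_bounded_away_from_zero: "\<exists>\<mu>>0. \<forall>x. \<bar>x\<bar> \<le> R \<longrightarrow> \<mu> \<le> v x"
proof -
  have "\<exists>\<mu>>0. \<forall>x. \<bar>x\<bar> \<le> real k * \<gamma> \<longrightarrow> \<mu> \<le> v x" for k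
  proof (induction k)
    case 0
    then show ?case using v_pos[of 0] by auto
  next
    case (Suc k)
    then obtain \<mu> where "0 < \<mu>" and \<mu>: "\<And>x. \<bar>x\<bar> \<le> real k * \<gamma> \<Longrightarrow> \<mu> \<le> v x" by blast
    obtain \<mu>1 where "0 < \<mu>1" and \<mu>1: "\<And>x. real k * \<gamma> \<le> x \<and> x \<le> real k * \<gamma> + \<gamma> \<Longrightarrow> \<mu>1 \<le> v x"
      using v_lower_bound_on_interval by blast
    obtain \<mu>2 where "0 < \<mu>2" and \<mu>2: "\<And>x. - real k * \<gamma> - \<gamma> \<le> x \<and> x \<le> - real k * \<gamma> - \<gamma> + \<gamma> \<Longrightarrow> \<mu>2 \<le> v x"
      using v_lower_bound_on_interval by blast
    have "min \<mu> (min \<mu>1 \<mu>2) \<le> v x" if "\<bar>x\<bar> \<le> real (Suc k) * \<gamma>" for x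
    proof -
      have x: "\<bar>x\<bar> \<le> real k * \<gamma> + \<gamma>" using that by (simp add: distrib_right)
      consider "\<bar>x\<bar> \<le> real k * \<gamma>" | "real k * \<gamma> \<le> x" | "x \<le> - real k * \<gamma>" by linarith
      then show ?thesis
      proof cases
        case 1
        then show ?thesis using \<mu> by fastforce
      next
        case 2
        then have "\<mu>1 \<le> v x" using x by (intro \<mu>1) auto
        then show ?thesis by simp
      next
        case 3
        then have "\<mu>2 \<le> v x" using x by (intro \<mu>2) auto
        then show ?thesis by simp
      qed
    qed
    then show ?case using \<open>0 < \<mu>\<close> \<open>0 < \<mu>1\<close> \<open>0 < \<mu>2\<close> by (intro exI[of _ "min \<mu> (min \<mu>1 \<mu>2)"]) auto
  qed
  moreover obtain k :: nat where "R / \<gamma> \<le> real k" using real_arch_simple by blast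
  then have "R \<le> real k * \<gamma>" using gamma_pos by (simp add: divide_le_eq)
  ultimately show ?thesis by (meson order_trans)
qed

definition trans_dens :: "real \<Rightarrow> real \<Rightarrow> real" where
  "trans_dens x y = exp (- V1 y - V2 (y - x)) * v y / (lam * v x)"

lemma ennreal_trans_dens:
  "ennreal (trans_dens x y) = ennreal (1 / (lam * v x)) * ennreal (exp (- V1 y) * exp (- V2 (y - x)) * v y)"
  using lam_pos v_pos[of x] exp_V1_v_nonneg[of y]
  by (simp add: trans_dens_def ennreal_mult[symmetric] exp_diff exp_minus field_simps)

lemma trans_dens_measurable[measurable]: "(\<lambda>y. ennreal (trans_dens x y)) \<in> borel_measurable borel"
  unfolding trans_dens_def by measurable

lemma trans_dens_nonneg: "0 \<le> trans_dens x y"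
  using lam_pos v_pos[of x] v_pos[of y] by (simp add: trans_dens_def)

lemma trans_dens_mass: "(\<integral>\<^sup>+y. ennreal (trans_dens x y) \<partial>lborel) = 1"
  using lam_pos v_pos[of x]
  by (simp add: ennreal_trans_dens nn_integral_cmult eigen_equation[symmetric] ennreal_mult[symmetric])

definition "abs_moment_exp_V1_v = enn2real (\<integral>\<^sup>+y. ennreal (\<bar>y\<bar> * (exp (- V1 y) * v y)) \<partial>lborel)"

lemma trans_dens_abs_moment:
  "(\<integral>\<^sup>+y. ennreal (trans_dens x y) * ennreal \<bar>y\<bar> \<partial>lborel) \<le> ennreal (exp (- c2) * abs_moment_exp_V1_v / (lam * v x))"
proof -
  have "(\<integral>\<^sup>+y. ennreal (trans_dens x y) * ennreal \<bar>y\<bar> \<partial>lborel)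
      \<le> (\<integral>\<^sup>+y. ennreal (exp (- c2) / (lam * v x)) * ennreal (\<bar>y\<bar> * (exp (- V1 y) * v y)) \<partial>lborel)"
  proof (intro nn_integral_mono)
    fix y
    have "trans_dens x y * \<bar>y\<bar> = exp (- V2 (y - x)) / (lam * v x) * (\<bar>y\<bar> * (exp (- V1 y) * v y))"
      by (simp add: trans_dens_def exp_diff exp_minus field_simps)
    also have "\<dots> \<le> exp (- c2) / (lam * v x) * (\<bar>y\<bar> * (exp (- V1 y) * v y))"
      using exp_V2_le lam_pos v_pos[of x] exp_V1_v_nonneg[of y]
      by (intro mult_right_mono divide_right_mono) auto
    finally have "trans_dens x y * \<bar>y\<bar> \<le> exp (- c2) / (lam * v x) * (\<bar>y\<bar> * (exp (- V1 y) * v y))" .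
    then show "ennreal (trans_dens x y) * ennreal \<bar>y\<bar>
        \<le> ennreal (exp (- c2) / (lam * v x)) * ennreal (\<bar>y\<bar> * (exp (- V1 y) * v y))"
      using trans_dens_nonneg[of x y] lam_pos v_pos[of x] exp_V1_v_nonneg[of y]
      by (simp add: ennreal_mult[symmetric] ennreal_leI)
  qed
  also have "\<dots> = ennreal (exp (- c2) / (lam * v x)) * ennreal abs_moment_exp_V1_v"
    using abs_moment_exp_V1_v_finite by (simp add: nn_integral_cmult abs_moment_exp_V1_v_def)
  also have "\<dots> = ennreal (exp (- c2) * abs_moment_exp_V1_v / (lam * v x))"
    using lam_pos v_pos[of x] by (simp add: abs_moment_exp_V1_v_def ennreal_mult[symmetric])
  finally show ?thesis .
qed

lemma trans_dens_inverse_v: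
  "(\<integral>\<^sup>+y. ennreal (trans_dens x y) * ennreal (1 / v y) \<partial>lborel)
    = ennreal (1 / (lam * v x)) * (\<integral>\<^sup>+y. ennreal (exp (- V1 y) * exp (- V2 (y - x))) \<partial>lborel)"
proof -
  have "ennreal (trans_dens x y) * ennreal (1 / v y)
      = ennreal (1 / (lam * v x)) * ennreal (exp (- V1 y) * exp (- V2 (y - x)))" for y
  proof -
    have "trans_dens x y * (1 / v y) = 1 / (lam * v x) * (exp (- V1 y) * exp (- V2 (y - x)))"
      using lam_pos v_pos[of x] v_pos[of y] by (simp add: trans_dens_def exp_diff exp_minus field_simps)
    then show ?thesis
      using trans_dens_nonneg[of x y] lam_pos v_pos[of x] v_pos[of y]
      by (simp add: ennreal_mult[symmetric])
  qed
  then show ?thesis by (simp add: nn_integral_cmult)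
qed

lemma trans_dens_lyapunov_le:
  assumes "0 \<le> D" "0 \<le> q"
    and overlap: "(\<integral>\<^sup>+y. ennreal (exp (- V1 y) * exp (- V2 (y - x))) \<partial>lborel) \<le> ennreal q"
  shows "(\<integral>\<^sup>+y. ennreal (trans_dens x y) * ennreal (\<bar>y\<bar> + D / v y) \<partial>lborel)
    \<le> ennreal ((exp (- c2) * abs_moment_exp_V1_v + D * q) / (lam * v x))"
proof -
  let ?M = "exp (- c2) * abs_moment_exp_V1_v"
  have "ennreal (D / v y) = ennreal D * ennreal (1 / v y)" for y
    using ennreal_mult[of D "1 / v y"] \<open>0 \<le> D\<close> v_pos[of y] by simp
  then have "ennreal (trans_dens x y) * ennreal (\<bar>y\<bar> + D / v y)
      = ennreal (trans_dens x y) * ennreal \<bar>y\<bar> + ennreal D * (ennreal (trans_dens x y) * ennreal (1 / v y))" for y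
    using \<open>0 \<le> D\<close> v_pos[of y] by (simp add: distrib_left mult_ac)
  then have "(\<integral>\<^sup>+y. ennreal (trans_dens x y) * ennreal (\<bar>y\<bar> + D / v y) \<partial>lborel)
      = (\<integral>\<^sup>+y. ennreal (trans_dens x y) * ennreal \<bar>y\<bar> \<partial>lborel)
        + ennreal D * (\<integral>\<^sup>+y. ennreal (trans_dens x y) * ennreal (1 / v y) \<partial>lborel)"
    by (simp add: nn_integral_add nn_integral_cmult)
  also have "\<dots> \<le> ennreal (?M / (lam * v x)) + ennreal D * (ennreal (1 / (lam * v x)) * ennreal q)"
    unfolding trans_dens_inverse_v
    by (intro add_mono mult_left_mono trans_dens_abs_moment overlap) auto
  also have "\<dots> = ennreal ((?M + D * q) / (lam * v x))"
    using \<open>0 \<le> D\<close> \<open>0 \<le> q\<close> lam_pos v_pos[of x]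
    by (simp add: abs_moment_exp_V1_v_def ennreal_mult[symmetric] ennreal_plus[symmetric] add_divide_distrib
        del: ennreal_plus)
  finally show ?thesis .
qed

lemma lyapunov_drift:
  obtains D B where "1 \<le> D" "0 \<le> B"
    "\<And>x. (\<integral>\<^sup>+y. ennreal (trans_dens x y) * ennreal (\<bar>y\<bar> + D / v y) \<partial>lborel)
        \<le> ennreal (3 / 4 * (\<bar>x\<bar> + D / v x) + B)"
proof -
  obtain R where small: "\<And>x. R \<le> \<bar>x\<bar> \<Longrightarrow>
      (\<integral>\<^sup>+y. ennreal (exp (- V1 y) * exp (- V2 (y - x))) \<partial>lborel) \<le> ennreal (lam / 2)"
    using overlaps_small by blast
  obtain \<mu> where "0 < \<mu>" and \<mu>: "\<And>x. \<bar>x\<bar> \<le> R \<Longrightarrow> \<mu> \<le> v x"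
    using v_bounded_away_from_zero by blast
  define M where "M = exp (- c2) * abs_moment_exp_V1_v"
  have "0 \<le> M" by (simp add: M_def abs_moment_exp_V1_v_def)
  define D where "D = 4 * (M / lam) + 4"
  define B where "B = (M + D * (exp (- c1) * exp_V2_mass)) / (lam * \<mu>)"
  have "1 \<le> D" using \<open>0 \<le> M\<close> lam_pos by (simp add: D_def)
  have D_bound: "M / lam + D / 2 \<le> 3 / 4 * D" using lam_pos unfolding D_def by (simp add: field_simps)
  have "0 \<le> B" using \<open>0 \<le> M\<close> \<open>1 \<le> D\<close> \<open>0 < \<mu>\<close> lam_pos masses_nonneg by (simp add: B_def)
  have "(\<integral>\<^sup>+y. ennreal (trans_dens x y) * ennreal (\<bar>y\<bar> + D / v y) \<partial>lborel)
      \<le> ennreal (3 / 4 * (\<bar>x\<bar> + D / v x) + B)" for x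
  proof -
    define q where "q = (if R \<le> \<bar>x\<bar> then lam / 2 else exp (- c1) * exp_V2_mass)"
    have "0 \<le> q" using lam_pos masses_nonneg by (simp add: q_def)
    have drift: "(M + D * q) / (lam * v x) \<le> 3 / 4 * (\<bar>x\<bar> + D / v x) + B"
    proof (cases "R \<le> \<bar>x\<bar>")
      case True
      have "(M + D * q) / (lam * v x) = (M / lam + D / 2) / v x"
        using True lam_pos v_pos[of x] by (simp add: q_def field_simps)
      also have "\<dots> \<le> (3 / 4 * D) / v x"
        using v_pos[of x] D_bound by (intro divide_right_mono) auto
      also have "\<dots> = 3 / 4 * (D / v x)" by simp
      finally show ?thesis
        using \<open>0 \<le> B\<close> distrib_left[of "3 / 4" "\<bar>x\<bar>" "D / v x"] abs_ge_zero[of x] by linarith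
    next
      case False
      then have q: "exp (- c1) * exp_V2_mass = q" by (simp add: q_def)
      have "(M + D * q) / (lam * v x) \<le> B"
        unfolding B_def q using False \<mu>[of x] \<open>0 < \<mu>\<close> lam_pos v_pos[of x] \<open>0 \<le> M\<close> \<open>1 \<le> D\<close> \<open>0 \<le> q\<close>
        by (intro divide_left_mono mult_left_mono) auto
      moreover have "0 \<le> 3 / 4 * (\<bar>x\<bar> + D / v x)" using \<open>1 \<le> D\<close> v_pos[of x] by simp
      ultimately show ?thesis by linarith
    qed
    have "(\<integral>\<^sup>+y. ennreal (trans_dens x y) * ennreal (\<bar>y\<bar> + D / v y) \<partial>lborel) \<le> ennreal ((M + D * q) / (lam * v x))"
      unfolding M_def using \<open>1 \<le> D\<close> \<open>0 \<le> q\<close> small overlap_le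
      by (intro trans_dens_lyapunov_le) (auto simp: q_def)
    also have "\<dots> \<le> ennreal (3 / 4 * (\<bar>x\<bar> + D / v x) + B)"
      using drift by (rule ennreal_leI)
    finally show ?thesis .
  qed
  with \<open>1 \<le> D\<close> \<open>0 \<le> B\<close> that show ?thesis by blast
qed

lemma chain_expect_moments_bounded:
  "\<exists>C>0. \<forall>n. chain_expect trans_dens n (\<lambda>y. ennreal \<bar>y\<bar>) x0 \<le> ennreal C
            \<and> chain_expect trans_dens n (\<lambda>y. ennreal (1 / v y)) x0 \<le> ennreal C"
proof -
  obtain D B where "1 \<le> D" "0 \<le> B" and drift: "\<And>x.
      (\<integral>\<^sup>+y. ennreal (trans_dens x y) * ennreal (\<bar>y\<bar> + D / v y) \<partial>lborel) \<le> ennreal (3 / 4 * (\<bar>x\<bar> + D / v x) + B)"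
    using lyapunov_drift by blast
  define C where "C = \<bar>x0\<bar> + D / v x0 + B / (1 - 3 / 4)"
  have D_div_v: "0 \<le> D / v y" for y
    using \<open>1 \<le> D\<close> v_pos[of y] by simp
  then have F_nonneg: "0 \<le> \<bar>y\<bar> + D / v y" for y
    by simp
  have bound: "chain_expect trans_dens n (\<lambda>y. ennreal (\<bar>y\<bar> + D / v y)) x0 \<le> ennreal C" for n
    unfolding C_def using \<open>0 \<le> B\<close>
    by (intro chain_expect_drift_bounded[where F = "\<lambda>y. \<bar>y\<bar> + D / v y" and c = "3 / 4",
          OF trans_dens_measurable _ F_nonneg trans_dens_mass drift]) auto
  have "chain_expect trans_dens n (\<lambda>y. ennreal \<bar>y\<bar>) x0 \<le> ennreal C" for n
    by (rule order_trans[OF chain_expect_mono bound]) (simp add: D_div_v ennreal_leI)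
  moreover have "chain_expect trans_dens n (\<lambda>y. ennreal (1 / v y)) x0 \<le> ennreal C" for n
  proof (rule order_trans[OF chain_expect_mono bound])
    show "ennreal (1 / v y) \<le> ennreal (\<bar>y\<bar> + D / v y)" for y
      using \<open>1 \<le> D\<close> v_pos[of y] by (intro ennreal_leI) (simp add: divide_right_mono add_increasing)
  qed
  moreover have "0 < D / v x0" using \<open>1 \<le> D\<close> v_pos[of x0] by simp
  then have "0 < C" using \<open>0 \<le> B\<close> abs_ge_zero[of x0] by (simp add: C_def)
  ultimately show ?thesis by blast
qed

end

theorem proposition2p3:
  fixes V1 V2 v :: "real \<Rightarrow> real" and lam \<gamma> :: real
  assumes V1_meas: "V1 \<in> borel_measurable borel"
    and V1_below: "\<exists>c. \<forall>x. c \<le> V1 x"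
    and V1_sym: "\<forall>x. V1 (- x) = V1 x"
    and V1_inf: "filterlim V1 at_top at_infinity"
    and V1_int: "integrable lborel (\<lambda>x. exp (- 2 * V1 x))"
    and V2_meas: "V2 \<in> borel_measurable borel"
    and V2_below: "\<exists>c. \<forall>x. c \<le> V2 x"
    and gamma_pos: "\<gamma> > 0"
    and V2_above: "\<exists>c. \<forall>x\<in>{-\<gamma>..\<gamma>}. V2 x \<le> c"
    and V2_int: "integrable lborel (\<lambda>x. \<bar>x\<bar> * exp (- V2 x))"
    and lam_pos: "lam > 0"
    and lam_def: "lam = spectral_radius_L2 (kernel_op (\<lambda>x y. exp (- V1 y - V2 (y - x))))"
    and v_L2: "L2 v"
    and v_pos: "\<forall>x. v x > 0"
    and v_eig: "\<forall>x. v x = (1 / lam) * (\<integral>y. exp (- V1 y - V2 (y - x)) * v y \<partial>lborel)"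
  shows "\<exists>C::real. 0 < C \<and> (\<forall>n::nat.
     chain_expect (\<lambda>x y. exp (- V1 y - V2 (y - x)) * v y / (lam * v x)) n
        (\<lambda>y. ennreal \<bar>y\<bar>) 0 \<le> ennreal C
   \<and> chain_expect (\<lambda>x y. exp (- V1 y - V2 (y - x)) * v y / (lam * v x)) n
        (\<lambda>y. ennreal (1 / v y)) 0 \<le> ennreal C)"
proof -
  obtain c1 where c1: "\<And>x. c1 \<le> V1 x" using V1_below by blast
  obtain c2 where c2: "\<And>x. c2 \<le> V2 x" using V2_below by blast
  obtain C\<gamma> where C\<gamma>: "\<And>x. x \<in> {-\<gamma>..\<gamma>} \<Longrightarrow> V2 x \<le> C\<gamma>" using V2_above by blast
  have "v \<in> borel_measurable borel" "integrable lborel (\<lambda>x. (v x)\<^sup>2)"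
    using v_L2 by (auto simp: L2_def)
  then interpret kernel_eigenfunction V1 V2 v lam \<gamma> c1 c2 C\<gamma>
    using V1_meas V2_meas c1 c2 gamma_pos C\<gamma> V1_inf V1_int V2_int lam_pos v_pos v_eig
    by unfold_locales blast+
  show ?thesis
    using chain_expect_moments_bounded[of 0] by (simp add: trans_dens_def[abs_def])
qed

end
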